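(* Let $p$ be a prime, let $N,K,T,M,h$ be positive integers with $K\mid M$, and let $\beta_1,\ldots,\beta_{K+T}\in\mathbb{F}_p$ be pairwise distinct and $\alpha_1,\ldots,\alpha_N\in\mathbb{F}_p$ be pairwise distinct with $\{\alpha_1,\ldots,\alpha_N\}\cap\{\beta_1,\ldots,\beta_{K+T}\}=\emptyset$. For $k\in[K+T]$ let $L_k(x)=\prod_{\ell\in[K+T]\setminus\{k\}}\frac{x-\beta_\ell}{\beta_k-\beta_\ell}$. For each client $n\in[N]$ let $D_n,d_n$ be positive integers, let $\overline{X}_n^i\in\mathbb{F}_p^{M\times d_n}$ and $\overline{W}_n^i\in\mathbb{F}_p^{d_n\times h}$ for $i\in[D_n]$, and for $k\in[K]$ let $\overline{X}_{n,k}^i\in\mathbb{F}_p^{(M/K)\times d_n}$ be the $k$-th block of $M/K$ consecutive rows of $\overline{X}_n^i$. Let $Z_{n,k}^i\in\mathbb{F}_p^{(M/K)\times d_n}$ and $V_{n,k}^i\in\mathbb{F}_p^{d_n\times h}$ ($k=K+1,\ldots,K+T$) be arbitrary (mask) matrices, and define the polynomials $$F_n^i(x)=\sum_{k=1}^K\overline{X}_{n,k}^iL_k(x)+\sum_{k=K+1}^{K+T}Z_{n,k}^iL_k(x),\qquad G_n^i(x)=\sum_{k=1}^K\overline{W}_{n}^iL_k(x)+\sum_{k=K+1}^{K+T}V_{n,k}^iL_k(x).$$ Fix a batch $\mathcal{B}\subseteq[M/K]$ of row indices, and for a matrix $A$ with $M/K$ rows let $A^{(\mathcal{B})}$ denote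 its submatrix of rows indexed by $\mathcal{B}$. For each $n'\in[N]$ define the coded result $$\widetilde{H}_{n'}^{(\mathcal{B})}=\sum_{n=1}^N\sum_{i=1}^{D_n}F_n^{i}(\alpha_{n'})^{(\mathcal{B})}\,G_n^i(\alpha_{n'}),$$ and for each $n$ let $\overline{H}_n^{(\mathcal{B})}$ be the vertical stacking over $k=1,\ldots,K$ of the matrices $\sum_{i=1}^{D_n}(\overline{X}_{n,k}^{i})^{(\mathcal{B})}\overline{W}_n^i$. Then for every subset $\mathcal{U}\subseteq[N]$ with $|\mathcal{U}|\ge 2(K+T-1)+1$ (i.e., in the presence of up to $N-2(K+T-1)-1$ straggling clients whose results are missing), the sum $\overline{H}^{(\mathcal{B})}=\sum_{n=1}^N\overline{H}_n^{(\mathcal{B})}$ can be exactly recovered from $\{\widetilde{H}_{n'}^{(\mathcal{B})}:n'\in\mathcal{U}\}$ (together with the public points $\alpha_{n'}$, $\beta_k$).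
   Context: This describes the FedVS protocol for split vertical federated learning: client $n$ holds quantized local data (the $i$-th matrix $\overline{X}_n^i$ being the quantized $i$-th elementwise power of its data) and a quantized polynomial-network local model $(\overline{W}_n^1,\ldots,\overline{W}_n^{D_n})$; the pair $\widetilde{X}_{n,n'}=(F_n^i(\alpha_{n'}))_i$, $\widetilde{W}_{n,n'}=(G_n^i(\alpha_{n'}))_i$ is the Lagrange-coded secret share sent by client $n$ to client $n'$, and $\widetilde{H}^{(\mathcal{B})}_{n'}$ is what client $n'$ uploads to the server. $[N]=\{1,\ldots,N\}$. *)

theory Defs
  imports Main "HOL-Computational_Algebra.Primes" "HOL-Library.Cardinality"
begin

text \<open>Matrices over a field are represented as functions row index => column index => entry,
  with 0-based row/column indices; the dimensions are carried explicitly in the statement.\<close>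
type_synonym 'a fmat = "nat \<Rightarrow> nat \<Rightarrow> 'a"

definition mmul :: "nat \<Rightarrow> 'a::comm_ring_1 fmat \<Rightarrow> 'a fmat \<Rightarrow> 'a fmat" where
  "mmul d A B = (\<lambda>r c. \<Sum>j<d. A r j * B j c)"

definition lagrange_L :: "(nat \<Rightarrow> 'a::field) \<Rightarrow> nat \<Rightarrow> nat \<Rightarrow> 'a \<Rightarrow> 'a" where
  "lagrange_L beta KT k x = (\<Prod>l\<in>{1..KT} - {k}. (x - beta l) / (beta k - beta l))"

definition row_block :: "nat \<Rightarrow> nat \<Rightarrow> 'a fmat \<Rightarrow> nat \<Rightarrow> 'a fmat" where
  "row_block M K A k = (\<lambda>r c. A ((k - 1) * (M div K) + r) c)"

definition submat_rows :: "nat set \<Rightarrow> 'a fmat \<Rightarrow> 'a fmat" where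
  "submat_rows B A = (\<lambda>j c. A (sorted_list_of_set B ! j) c)"

text \<open>F_n^i(x) and G_n^i(x) (evaluated at x).  X n i = Xbar_n^i, Z n i k = Z_{n,k}^i,
  W n i = Wbar_n^i, V n i k = V_{n,k}^i.\<close>
definition polyF :: "nat \<Rightarrow> nat \<Rightarrow> nat \<Rightarrow> (nat \<Rightarrow> 'a::field) \<Rightarrow>
    (nat \<Rightarrow> nat \<Rightarrow> 'a fmat) \<Rightarrow> (nat \<Rightarrow> nat \<Rightarrow> nat \<Rightarrow> 'a fmat) \<Rightarrow> nat \<Rightarrow> nat \<Rightarrow> 'a \<Rightarrow> 'a fmat" where
  "polyF M K T beta X Z n i x = (\<lambda>r c.
      (\<Sum>k=1..K. row_block M K (X n i) k r c * lagrange_L beta (K+T) k x)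
    + (\<Sum>k=K+1..K+T. Z n i k r c * lagrange_L beta (K+T) k x))"

definition polyG :: "nat \<Rightarrow> nat \<Rightarrow> (nat \<Rightarrow> 'a::field) \<Rightarrow>
    (nat \<Rightarrow> nat \<Rightarrow> 'a fmat) \<Rightarrow> (nat \<Rightarrow> nat \<Rightarrow> nat \<Rightarrow> 'a fmat) \<Rightarrow> nat \<Rightarrow> nat \<Rightarrow> 'a \<Rightarrow> 'a fmat" where
  "polyG K T beta W V n i x = (\<lambda>r c.
      (\<Sum>k=1..K. W n i r c * lagrange_L beta (K+T) k x)
    + (\<Sum>k=K+1..K+T. V n i k r c * lagrange_L beta (K+T) k x))"

definition coded_H :: "nat \<Rightarrow> nat \<Rightarrow> nat \<Rightarrow> nat \<Rightarrow> (nat \<Rightarrow> 'a::field) \<Rightarrow> (nat \<Rightarrow> 'a) \<Rightarrow> nat set \<Rightarrow>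
    (nat \<Rightarrow> nat) \<Rightarrow> (nat \<Rightarrow> nat) \<Rightarrow>
    (nat \<Rightarrow> nat \<Rightarrow> 'a fmat) \<Rightarrow> (nat \<Rightarrow> nat \<Rightarrow> 'a fmat) \<Rightarrow>
    (nat \<Rightarrow> nat \<Rightarrow> nat \<Rightarrow> 'a fmat) \<Rightarrow> (nat \<Rightarrow> nat \<Rightarrow> nat \<Rightarrow> 'a fmat) \<Rightarrow> nat \<Rightarrow> 'a fmat" where
  "coded_H N K T M alpha beta B D d X W Z V n' = (\<lambda>r c.
     \<Sum>n=1..N. \<Sum>i=1..D n.
       mmul (d n) (submat_rows B (polyF M K T beta X Z n i (alpha n')))
                  (polyG K T beta W V n i (alpha n')) r c)"

text \<open>Hbar_n^(B): vertical stacking over k = 1..K of the |B| x h matrices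
  sum_i (Xbar_{n,k}^i)^(B) Wbar_n^i.  Row r of the stack lies in block r div |B| + 1,
  local row r mod |B|.\<close>
definition Hbar_n :: "nat \<Rightarrow> nat \<Rightarrow> nat set \<Rightarrow> (nat \<Rightarrow> nat) \<Rightarrow> (nat \<Rightarrow> nat) \<Rightarrow>
    (nat \<Rightarrow> nat \<Rightarrow> 'a::field fmat) \<Rightarrow> (nat \<Rightarrow> nat \<Rightarrow> 'a fmat) \<Rightarrow> nat \<Rightarrow> 'a fmat" where
  "Hbar_n K M B D d X W n = (\<lambda>r c.
     \<Sum>i=1..D n. mmul (d n) (submat_rows B (row_block M K (X n i) (r div card B + 1))) (W n i)
       (r mod card B) c)"

definition Hbar :: "nat \<Rightarrow> nat \<Rightarrow> nat \<Rightarrow> nat set \<Rightarrow> (nat \<Rightarrow> nat) \<Rightarrow> (nat \<Rightarrow> nat) \<Rightarrow>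
    (nat \<Rightarrow> nat \<Rightarrow> 'a::field fmat) \<Rightarrow> (nat \<Rightarrow> nat \<Rightarrow> 'a fmat) \<Rightarrow> 'a fmat" where
  "Hbar N K M B D d X W = (\<lambda>r c. \<Sum>n=1..N. Hbar_n K M B D d X W n r c)"

end

theory Submission
  imports Defs "HOL-Computational_Algebra.Polynomial"
begin

text \<open>The upload of client n' is the value at alpha n' of the matrix polynomial
  H(x) = sum_n sum_i F_n^i(x)^(B) G_n^i(x).  Every F_n^i and G_n^i is a combination of the
  Lagrange basis polynomials L_k of degree K+T-1, so the entries of H have degree at most
  2(K+T-1), and any 2(K+T-1)+1 values of H at distinct points determine it by Lagrange
  interpolation.  Since L_k(beta j) = 0 for j \<noteq> k and L_k(beta k) = 1, the masks vanish at
  beta k for k \<le> K, so H(beta k) is the k-th block of the stacked result: the decoder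
  interpolates through the received values and evaluates at beta k.\<close>

definition polyfun_le :: "nat \<Rightarrow> ('a::field \<Rightarrow> 'a) \<Rightarrow> bool" where
  "polyfun_le m f \<longleftrightarrow> (\<exists>P. degree P \<le> m \<and> f = poly P)"

lemma polyfun_le_const: "polyfun_le m (\<lambda>x. c)"
  unfolding polyfun_le_def by (rule exI[of _ "[:c:]"]) auto

lemma polyfun_le_add:
  assumes "polyfun_le m f" "polyfun_le m g"
  shows "polyfun_le m (\<lambda>x. f x + g x)"
proof -
  obtain P Q where "degree P \<le> m" "f = poly P" "degree Q \<le> m" "g = poly Q"
    using assms unfolding polyfun_le_def by blast
  then show ?thesis
    unfolding polyfun_le_def by (intro exI[of _ "P + Q"]) (auto intro: degree_add_le)
qed

lemma polyfun_le_mult: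
  assumes "polyfun_le m f" "polyfun_le n g"
  shows "polyfun_le (m + n) (\<lambda>x. f x * g x)"
proof -
  obtain P Q where "degree P \<le> m" "f = poly P" "degree Q \<le> n" "g = poly Q"
    using assms unfolding polyfun_le_def by blast
  then show ?thesis
    unfolding polyfun_le_def by (intro exI[of _ "P * Q"]) (auto intro: order.trans[OF degree_mult_le])
qed

lemma polyfun_le_sum:
  "(\<And>a. a \<in> A \<Longrightarrow> polyfun_le m (f a)) \<Longrightarrow> polyfun_le m (\<lambda>x. \<Sum>a\<in>A. f a x)"
proof (induction A rule: infinite_finite_induct)
  case (insert a A)
  then show ?case using polyfun_le_add[of m "f a" "\<lambda>x. \<Sum>a\<in>A. f a x"] by simp
qed (simp_all add: polyfun_le_const)

lemma polyfun_le_prod: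
  "finite A \<Longrightarrow> (\<And>a. a \<in> A \<Longrightarrow> polyfun_le 1 (f a)) \<Longrightarrow> polyfun_le (card A) (\<lambda>x. \<Prod>a\<in>A. f a x)"
proof (induction A rule: finite_induct)
  case empty
  then show ?case using polyfun_le_const[of 0 1] by simp
next
  case (insert a A)
  then show ?case using polyfun_le_mult[of 1 "f a" "card A" "\<lambda>x. \<Prod>a\<in>A. f a x"] by simp
qed

lemma polyfun_le_affine: "polyfun_le 1 (\<lambda>x. (x - b) / c)"
  unfolding polyfun_le_def
proof (intro exI conjI)
  show "degree [:- b / c, 1 / c:] \<le> 1" by simp
  show "(\<lambda>x. (x - b) / c) = poly [:- b / c, 1 / c:]"
    by (simp add: fun_eq_iff diff_divide_distrib)
qed

definition lagrange_basis :: "('i \<Rightarrow> 'a::field) \<Rightarrow> 'i set \<Rightarrow> 'i \<Rightarrow> 'a \<Rightarrow> 'a" where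
  "lagrange_basis a S u x = (\<Prod>v\<in>S - {u}. (x - a v) / (a u - a v))"

lemma lagrange_L_eq_lagrange_basis: "lagrange_L beta KT = lagrange_basis beta {1..KT}"
  by (simp add: fun_eq_iff lagrange_L_def lagrange_basis_def)

lemma polyfun_le_lagrange_basis:
  assumes "finite S" "u \<in> S"
  shows "polyfun_le (card S - 1) (lagrange_basis a S u)"
proof -
  have "polyfun_le (card (S - {u})) (\<lambda>x. \<Prod>v\<in>S - {u}. (x - a v) / (a u - a v))"
    using assms by (intro polyfun_le_prod polyfun_le_affine) simp
  then show ?thesis
    using assms by (simp add: lagrange_basis_def[abs_def])
qed

lemma lagrange_basis_at_node:
  assumes "finite S" "inj_on a S" "u \<in> S" "w \<in> S"
  shows "lagrange_basis a S u (a w) = (if w = u then 1 else 0)"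
proof (cases "w = u")
  case True
  have "a u \<noteq> a v" if "v \<in> S - {u}" for v
    using that assms(2,3) by (auto dest: inj_onD)
  then show ?thesis
    using True by (simp add: lagrange_basis_def)
next
  case False
  then have "w \<in> S - {u}" using assms(4) by blast
  then show ?thesis
    using False assms(1) by (auto simp: lagrange_basis_def intro: prod_zero)
qed

lemma lagrange_combination_at_node:
  assumes "finite S" "inj_on a S" "A \<subseteq> S" "w \<in> S"
  shows "(\<Sum>u\<in>A. c u * lagrange_basis a S u (a w)) = (if w \<in> A then c w else 0)"
proof -
  have "(\<Sum>u\<in>A. c u * lagrange_basis a S u (a w)) = (\<Sum>u\<in>A. if w = u then c u else 0)"
    using assms by (intro sum.cong) (auto simp: lagrange_basis_at_node)
  then show ?thesis
    using finite_subset[OF assms(3,1)] by simp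
qed

lemma polyfun_le_lagrange_combination:
  assumes "finite S" "A \<subseteq> S"
  shows "polyfun_le (card S - 1) (\<lambda>x. \<Sum>u\<in>A. c u * lagrange_basis a S u x)"
  using assms
  by (intro polyfun_le_sum polyfun_le_mult[of 0, simplified] polyfun_le_const
      polyfun_le_lagrange_basis) auto

theorem lagrange_interpolation:
  assumes "finite S" "inj_on a S" "polyfun_le m f" "m < card S"
  shows "f y = (\<Sum>u\<in>S. f (a u) * lagrange_basis a S u y)"
proof -
  define g where "g y = (\<Sum>u\<in>S. f (a u) * lagrange_basis a S u y)" for y
  obtain P where P: "degree P \<le> m" "f = poly P"
    using assms(3) unfolding polyfun_le_def by blast
  obtain Q where Q: "degree Q \<le> card S - 1" "g = poly Q"
    using polyfun_le_lagrange_combination[OF assms(1) order.refl, where c = "\<lambda>u. f (a u)"]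
    unfolding polyfun_le_def g_def[abs_def] by blast
  have "g (a w) = f (a w)" if "w \<in> S" for w
    using that lagrange_combination_at_node[OF assms(1,2) order.refl that] by (simp add: g_def)
  then have "poly P x = poly Q x" if "x \<in> a ` S" for x
    using that P(2) Q(2) by auto
  moreover have "card (a ` S) = card S"
    using assms(2) by (rule card_image)
  ultimately have "P = Q"
    using P(1) Q(1) assms(4) by (intro poly_eqI_degree[of "a ` S"]) auto
  then have "f y = g y"
    using P(2) Q(2) by simp
  then show ?thesis
    unfolding g_def .
qed

lemma lagrange_L_combination_at_beta:
  assumes "inj_on beta {1..KT}" "A \<subseteq> {1..KT}" "j \<in> {1..KT}"
  shows "(\<Sum>k\<in>A. c k * lagrange_L beta KT k (beta j)) = (if j \<in> A then c j else 0)"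
  unfolding lagrange_L_eq_lagrange_basis
  by (rule lagrange_combination_at_node[OF finite_atLeastAtMost assms])

lemma polyfun_le_lagrange_L_combination:
  assumes "A \<subseteq> {1..KT}"
  shows "polyfun_le (KT - 1) (\<lambda>x. \<Sum>k\<in>A. c k * lagrange_L beta KT k x)"
  using polyfun_le_lagrange_combination[OF finite_atLeastAtMost assms]
  by (simp add: lagrange_L_eq_lagrange_basis)

lemma polyF_at_beta:
  assumes "inj_on beta {1..K+T}" "k \<in> {1..K}"
  shows "polyF M K T beta X Z n i (beta k) = row_block M K (X n i) k"
  using assms unfolding polyF_def
  by (subst (1 2) lagrange_L_combination_at_beta) auto

lemma polyG_at_beta:
  assumes "inj_on beta {1..K+T}" "k \<in> {1..K}"
  shows "polyG K T beta W V n i (beta k) = W n i"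
  using assms unfolding polyG_def
  by (subst (1 2) lagrange_L_combination_at_beta) auto

lemma polyfun_le_polyF: "polyfun_le (K + T - 1) (\<lambda>x. polyF M K T beta X Z n i x r c)"
  unfolding polyF_def by (intro polyfun_le_add polyfun_le_lagrange_L_combination) auto

lemma polyfun_le_polyG: "polyfun_le (K + T - 1) (\<lambda>x. polyG K T beta W V n i x r c)"
  unfolding polyG_def by (intro polyfun_le_add polyfun_le_lagrange_L_combination) auto

lemma polyfun_le_mmul:
  assumes "\<And>j. polyfun_le m (\<lambda>x. A x r j)" "\<And>j. polyfun_le n (\<lambda>x. B x j c)"
  shows "polyfun_le (m + n) (\<lambda>x. mmul d (A x) (B x) r c)"
  unfolding mmul_def by (intro polyfun_le_sum polyfun_le_mult assms)

definition coded_poly :: "nat \<Rightarrow> nat \<Rightarrow> nat \<Rightarrow> nat \<Rightarrow> (nat \<Rightarrow> 'a::field) \<Rightarrow> nat set \<Rightarrow>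
    (nat \<Rightarrow> nat) \<Rightarrow> (nat \<Rightarrow> nat) \<Rightarrow>
    (nat \<Rightarrow> nat \<Rightarrow> 'a fmat) \<Rightarrow> (nat \<Rightarrow> nat \<Rightarrow> 'a fmat) \<Rightarrow>
    (nat \<Rightarrow> nat \<Rightarrow> nat \<Rightarrow> 'a fmat) \<Rightarrow> (nat \<Rightarrow> nat \<Rightarrow> nat \<Rightarrow> 'a fmat) \<Rightarrow> 'a \<Rightarrow> 'a fmat" where
  "coded_poly N K T M beta B D d X W Z V x = (\<lambda>r c.
     \<Sum>n=1..N. \<Sum>i=1..D n.
       mmul (d n) (submat_rows B (polyF M K T beta X Z n i x)) (polyG K T beta W V n i x) r c)"

lemma coded_H_eq_coded_poly:
  "coded_H N K T M alpha beta B D d X W Z V n' = coded_poly N K T M beta B D d X W Z V (alpha n')"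
  by (simp add: coded_H_def coded_poly_def)

lemma polyfun_le_coded_poly:
  "polyfun_le (2 * (K + T - 1)) (\<lambda>x. coded_poly N K T M beta B D d X W Z V x r c)"
  unfolding coded_poly_def mult_2 submat_rows_def
  by (intro polyfun_le_sum polyfun_le_mmul polyfun_le_polyF polyfun_le_polyG)

lemma coded_poly_at_beta:
  assumes "inj_on beta {1..K+T}" "r < K * card B"
  shows "coded_poly N K T M beta B D d X W Z V (beta (r div card B + 1)) (r mod card B) c
    = Hbar N K M B D d X W r c"
proof -
  have "r div card B < K"
    using assms(2) by (rule less_mult_imp_div_less)
  then have "r div card B + 1 \<in> {1..K}"
    by simp
  then show ?thesis
    using assms(1)
    by (simp add: coded_poly_def Hbar_def Hbar_n_def polyF_at_beta polyG_at_beta mmul_def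
        submat_rows_def)
qed

definition lagrange_decoder :: "(nat \<Rightarrow> 'a::field) \<Rightarrow> (nat \<Rightarrow> 'a) \<Rightarrow> nat set \<Rightarrow> nat set \<Rightarrow>
    (nat \<Rightarrow> 'a fmat) \<Rightarrow> 'a fmat" where
  "lagrange_decoder alpha beta B U H = (\<lambda>r c.
     \<Sum>u\<in>U. H u (r mod card B) c * lagrange_basis alpha U u (beta (r div card B + 1)))"

lemma lagrange_decoder_recovers_Hbar:
  assumes "inj_on beta {1..K+T}" "finite U" "inj_on alpha U" "2 * (K + T - 1) < card U"
    and "r < K * card B"
  shows "lagrange_decoder alpha beta B U
      (\<lambda>n'. if n' \<in> U then coded_H N K T M alpha beta B D d X W Z V n' else (\<lambda>_ _. 0)) r c
    = Hbar N K M B D d X W r c"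
proof -
  let ?H = "coded_poly N K T M beta B D d X W Z V" and ?k = "r div card B + 1"
  have "lagrange_decoder alpha beta B U
      (\<lambda>n'. if n' \<in> U then coded_H N K T M alpha beta B D d X W Z V n' else (\<lambda>_ _. 0)) r c
    = (\<Sum>u\<in>U. ?H (alpha u) (r mod card B) c * lagrange_basis alpha U u (beta ?k))"
    by (auto simp: lagrange_decoder_def coded_H_eq_coded_poly intro: sum.cong)
  also have "\<dots> = ?H (beta ?k) (r mod card B) c"
    by (rule lagrange_interpolation[OF assms(2,3) polyfun_le_coded_poly assms(4), symmetric])
  also have "\<dots> = Hbar N K M B D d X W r c"
    using assms(1,5) by (rule coded_poly_at_beta)
  finally show ?thesis .
qed

theorem theorem1:
  fixes p N K T M h :: nat
    and alpha beta :: "nat \<Rightarrow> 'a::{field,finite}"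
    and B :: "nat set"
  assumes "prime p" and "CARD('a) = p"
    and "N > 0" "K > 0" "T > 0" "M > 0" "h > 0"
    and "K dvd M"
    and "inj_on beta {1..K+T}"
    and "inj_on alpha {1..N}"
    and "alpha ` {1..N} \<inter> beta ` {1..K+T} = {}"
    and "B \<subseteq> {..<M div K}"
  shows "\<forall>U. U \<subseteq> {1..N} \<and> card U \<ge> 2 * (K + T - 1) + 1 \<longrightarrow>
    (\<exists>dec :: (nat \<Rightarrow> 'a fmat) \<Rightarrow> 'a fmat.
      \<forall>(D :: nat \<Rightarrow> nat) (d :: nat \<Rightarrow> nat) (X :: nat \<Rightarrow> nat \<Rightarrow> 'a fmat) (W :: nat \<Rightarrow> nat \<Rightarrow> 'a fmat)
        (Z :: nat \<Rightarrow> nat \<Rightarrow> nat \<Rightarrow> 'a fmat) (V :: nat \<Rightarrow> nat \<Rightarrow> nat \<Rightarrow> 'a fmat).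
        (\<forall>n\<in>{1..N}. D n > 0 \<and> d n > 0) \<longrightarrow>
        (\<forall>r < K * card B. \<forall>c < h.
           dec (\<lambda>n'. if n' \<in> U then coded_H N K T M alpha beta B D d X W Z V n' else (\<lambda>_ _. 0)) r c
           = Hbar N K M B D d X W r c))"
proof (intro allI impI)
  fix U
  assume "U \<subseteq> {1..N} \<and> card U \<ge> 2 * (K + T - 1) + 1"
  then have "finite U" "inj_on alpha U" "2 * (K + T - 1) < card U"
    using finite_subset inj_on_subset assms(10) by auto
  then show "\<exists>dec. \<forall>D d X W Z V. (\<forall>n\<in>{1..N}. D n > 0 \<and> d n > 0) \<longrightarrow>
        (\<forall>r < K * card B. \<forall>c < h.
           dec (\<lambda>n'. if n' \<in> U then coded_H N K T M alpha beta B D d X W Z V n' else (\<lambda>_ _. 0)) r c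
           = Hbar N K M B D d X W r c)"
    by (intro exI[of _ "lagrange_decoder alpha beta B U"] allI impI
        lagrange_decoder_recovers_Hbar[OF assms(9)])
qed

end
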